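(* Let $E$ be a Banach lattice. Then the set $B_{UDP}(E)$ of all $uaw$-Dunford-Pettis operators on $E$ is a closed subalgebra (with respect to the operator norm) of the algebra $B(E)$ of all bounded operators on $E$.
   Context: A net $(x_\alpha)$ in a Banach lattice $E$ is $uaw$-convergent to $x$ if $|x_\alpha-x|\wedge u\to 0$ weakly for every $u\in E_+$. A bounded operator $T\colon E\to E$ is $uaw$-Dunford-Pettis if every norm bounded $uaw$-null sequence $(x_n)$ in $E$ satisfies $\|Tx_n\|\to 0$. *)

theory Defs
  imports "HOL-Analysis.Analysis"
begin

definition labs :: "'a::{lattice, uminus} \<Rightarrow> 'a" where
  "labs x = sup x (- x)"

class banach_lattice = banach + lattice +
  assumes add_le_add_right_bl: "x \<le> y \<Longrightarrow> x + z \<le> y + z"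
    and scaleR_nonneg_bl: "0 \<le> x \<Longrightarrow> 0 \<le> a \<Longrightarrow> 0 \<le> a *\<^sub>R x"
    and norm_lattice_bl: "sup x (- x) \<le> sup y (- y) \<Longrightarrow> norm x \<le> norm y"

definition weakly_tendsto :: "(nat \<Rightarrow> 'a::real_normed_vector) \<Rightarrow> 'a \<Rightarrow> bool" where
  "weakly_tendsto x l \<longleftrightarrow> (\<forall>f :: 'a \<Rightarrow>\<^sub>L real. (\<lambda>n. f (x n)) \<longlonglongrightarrow> f l)"

definition uaw_tendsto :: "(nat \<Rightarrow> 'a::banach_lattice) \<Rightarrow> 'a \<Rightarrow> bool" where
  "uaw_tendsto x l \<longleftrightarrow> (\<forall>u. 0 \<le> u \<longrightarrow> weakly_tendsto (\<lambda>n. inf (labs (x n - l)) u) 0)"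

definition uaw_DP :: "('a::banach_lattice \<Rightarrow>\<^sub>L 'a) \<Rightarrow> bool" where
  "uaw_DP T \<longleftrightarrow> (\<forall>x. bounded (range x) \<longrightarrow> uaw_tendsto x 0 \<longrightarrow> (\<lambda>n. norm (T (x n))) \<longlonglongrightarrow> 0)"

end

theory Submission
  imports Defs
begin

text \<open>Nothing about lattices is needed: uaw-Dunford-Pettis operators are exactly the operators
that send every member of a fixed class of bounded sequences (the bounded uaw-null ones) to a
norm-null sequence. For any class of sequences these operators form a linear subspace that is a
left ideal under composition, and when the sequences are bounded the subspace is closed, because
operator-norm convergence of \<open>T\<^sub>k\<close> to \<open>T\<close> is uniform on the bounded range of a sequence, so the
limits in \<open>k\<close> and \<open>n\<close> may be interchanged.\<close>

definition null_on_sequences ::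
    "(nat \<Rightarrow> 'a::real_normed_vector) set \<Rightarrow> ('a \<Rightarrow>\<^sub>L 'b::real_normed_vector) set" where
  "null_on_sequences C = {T. \<forall>x\<in>C. (\<lambda>n. blinfun_apply T (x n)) \<longlonglongrightarrow> 0}"

lemma subspace_null_on_sequences:
  "subspace (null_on_sequences C :: ('a::real_normed_vector \<Rightarrow>\<^sub>L 'b::real_normed_vector) set)"
  unfolding subspace_def null_on_sequences_def
proof (intro conjI ballI allI; clarsimp)
  fix S T :: "'a \<Rightarrow>\<^sub>L 'b" and x
  assume "x \<in> C" and S: "\<forall>x\<in>C. (\<lambda>n. S (x n)) \<longlonglongrightarrow> 0"
    and T: "\<forall>x\<in>C. (\<lambda>n. T (x n)) \<longlonglongrightarrow> 0"
  show "(\<lambda>n. blinfun_apply (S + T) (x n)) \<longlonglongrightarrow> 0"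
    using tendsto_add_zero[OF S[rule_format, OF \<open>x \<in> C\<close>] T[rule_format, OF \<open>x \<in> C\<close>]]
    by (simp add: blinfun.add_left)
next
  fix c :: real and T :: "'a \<Rightarrow>\<^sub>L 'b" and x
  assume "x \<in> C" and T: "\<forall>x\<in>C. (\<lambda>n. T (x n)) \<longlonglongrightarrow> 0"
  show "(\<lambda>n. blinfun_apply (c *\<^sub>R T) (x n)) \<longlonglongrightarrow> 0"
    using tendsto_scaleR[OF tendsto_const T[rule_format, OF \<open>x \<in> C\<close>], of c]
    by (simp add: blinfun.scaleR_left)
qed

lemma blinfun_compose_null_on_sequences:
  assumes "T \<in> null_on_sequences C"
  shows "S o\<^sub>L T \<in> null_on_sequences C"
  using assms unfolding null_on_sequences_def
  by (auto intro: blinfun.tendsto_right_zero)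

lemma uniform_limit_blinfun_apply:
  fixes Ts :: "'i \<Rightarrow> 'a::real_normed_vector \<Rightarrow>\<^sub>L 'b::real_normed_vector"
  assumes lim: "(Ts \<longlongrightarrow> T) F" and "bounded X"
  shows "uniform_limit X (\<lambda>k. blinfun_apply (Ts k)) (blinfun_apply T) F"
proof (rule uniform_limitI)
  fix e :: real assume "e > 0"
  obtain M where M: "M > 0" "\<And>y. y \<in> X \<Longrightarrow> norm y \<le> M"
    using \<open>bounded X\<close> unfolding bounded_pos by blast
  have "\<forall>\<^sub>F k in F. norm (Ts k - T) < e / M"
    using lim \<open>e > 0\<close> M(1) by (simp add: tendsto_iff dist_norm)
  then show "\<forall>\<^sub>F k in F. \<forall>y\<in>X. dist (Ts k y) (T y) < e"
  proof eventually_elim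
    case (elim k)
    show ?case
    proof
      fix y assume "y \<in> X"
      have "dist (Ts k y) (T y) \<le> norm (Ts k - T) * norm y"
        by (metis blinfun.diff_left dist_norm norm_blinfun)
      also have "\<dots> \<le> norm (Ts k - T) * M"
        using M(2)[OF \<open>y \<in> X\<close>] by (simp add: mult_left_mono)
      also have "\<dots> < e"
        using elim M(1) by (simp add: pos_less_divide_eq)
      finally show "dist (Ts k y) (T y) < e" .
    qed
  qed
qed

lemma closed_null_on_sequences:
  assumes "\<And>x. x \<in> C \<Longrightarrow> bounded (range x)"
  shows "closed (null_on_sequences C :: ('a::real_normed_vector \<Rightarrow>\<^sub>L 'b::real_normed_vector) set)"
  unfolding closed_sequential_limits
proof (intro allI impI, elim conjE)
  fix Ts :: "nat \<Rightarrow> 'a \<Rightarrow>\<^sub>L 'b" and T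
  assume mem: "\<forall>k. Ts k \<in> null_on_sequences C" and lim: "Ts \<longlonglongrightarrow> T"
  show "T \<in> null_on_sequences C"
    unfolding null_on_sequences_def
  proof (intro CollectI ballI)
    fix x assume "x \<in> C"
    have "uniform_limit (range x) (\<lambda>k. blinfun_apply (Ts k)) (blinfun_apply T) sequentially"
      using uniform_limit_blinfun_apply[OF lim assms[OF \<open>x \<in> C\<close>]] .
    then have uniform: "uniform_limit UNIV (\<lambda>k n. Ts k (x n)) (\<lambda>n. T (x n)) sequentially"
      by (rule uniform_limit_compose') simp
    have null: "\<forall>\<^sub>F k in sequentially. (\<lambda>n. Ts k (x n)) \<longlonglongrightarrow> 0"
      using mem \<open>x \<in> C\<close> unfolding null_on_sequences_def by simp
    show "(\<lambda>n. T (x n)) \<longlonglongrightarrow> 0"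
      by (rule swap_uniform_limit'[OF null tendsto_const uniform]) simp_all
  qed
qed

lemma uaw_DP_eq_null_on_sequences:
  "{T. uaw_DP T} = null_on_sequences {x. bounded (range x) \<and> uaw_tendsto x 0}"
  unfolding uaw_DP_def null_on_sequences_def by (auto simp: tendsto_norm_zero_iff)

theorem proposition2p34:
  fixes B_UDP :: "('a::banach_lattice \<Rightarrow>\<^sub>L 'a) set"
  defines "B_UDP \<equiv> {T. uaw_DP T}"
  shows "subspace B_UDP \<and> (\<forall>S\<in>B_UDP. \<forall>T\<in>B_UDP. S o\<^sub>L T \<in> B_UDP) \<and> closed B_UDP"
  unfolding B_UDP_def uaw_DP_eq_null_on_sequences
  by (auto intro!: closed_null_on_sequences
      simp: subspace_null_on_sequences blinfun_compose_null_on_sequences)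

end
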